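(* Let $\Omega\subset\mathbb{R}^n$ be a bounded open set, $K\subset\Omega$ a non-empty compact set, and $\lambda>0$. Let $f(x)=\mathrm{dist}^2(x,K\cup\Omega^c)$ and let $f^{-}_{\overline\Omega}:\overline\Omega\to\mathbb{R}$ equal $f$ on $\Omega$ and $\inf_\Omega f$ on $\partial\Omega$. Then for every $x\in\overline\Omega$, $$\mathcal{M}(\lambda;K\cup\Omega^c)(x)=(1+\lambda)\Big(f^{-}_{\overline\Omega}(x)-C^l_{\lambda,\Omega}(f^{-}_{\overline\Omega})(x)\Big).$$
   Context: $\Omega^c=\mathbb{R}^n\setminus\Omega$; $\mathrm{dist}(x,A)=\inf_{y\in A}|x-y|$. For a nonempty closed set $F$, the quadratic multiscale medial axis map is $\mathcal{M}(\lambda;F)(x)=(1+\lambda)\big(\mathrm{dist}^2(x;F)-C^l_\lambda(\mathrm{dist}^2(\cdot;F))(x)\big)$ for $x\in\mathbb{R}^n$, where $C^l_\lambda(g)(x)=\mathrm{co}[g+\lambda|\cdot|^2](x)-\lambda|x|^2$ and $\mathrm{co}$ is the convex envelope. For bounded $g:\overline\Omega\to\mathbb{R}$ and $x\in\overline\Omega$: $M_{\lambda,\Omega}(g)(x)=\inf_{y\in\overline\Omega}\{g(y)+\lambda|y-x|^2\}$, $M^{\lambda}_{\Omega}(g)(x)=\sup_{y\in\overline\Omega}\{g(y)-\lambda|y-x|^2\}$, and $C^l_{\lambda,\Omega}(g)(x)=M^{\lambda}_{\Omega}(M_{\lambda,\Omega}(g))(x)$. *)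

theory Defs
  imports "HOL-Analysis.Analysis"
begin

definition convex_envelope :: "('a::euclidean_space \<Rightarrow> real) \<Rightarrow> 'a \<Rightarrow> real" where
  "convex_envelope g x = Sup {h x | h. convex_on UNIV h \<and> (\<forall>y. h y \<le> g y)}"

definition lower_transform :: "real \<Rightarrow> ('a::euclidean_space \<Rightarrow> real) \<Rightarrow> 'a \<Rightarrow> real" where
  "lower_transform l g x = convex_envelope (\<lambda>y. g y + l * (norm y)\<^sup>2) x - l * (norm x)\<^sup>2"

definition medial_axis_map :: "real \<Rightarrow> 'a::euclidean_space set \<Rightarrow> 'a \<Rightarrow> real" where
  "medial_axis_map l F x =
     (1 + l) * ((infdist x F)\<^sup>2 - lower_transform l (\<lambda>y. (infdist y F)\<^sup>2) x)"

definition moreau_lower :: "real \<Rightarrow> 'a::euclidean_space set \<Rightarrow> ('a \<Rightarrow> real) \<Rightarrow> 'a \<Rightarrow> real" where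
  "moreau_lower l \<Omega> g x = (INF y\<in>closure \<Omega>. g y + l * (norm (y - x))\<^sup>2)"

definition moreau_upper :: "real \<Rightarrow> 'a::euclidean_space set \<Rightarrow> ('a \<Rightarrow> real) \<Rightarrow> 'a \<Rightarrow> real" where
  "moreau_upper l \<Omega> g x = (SUP y\<in>closure \<Omega>. g y - l * (norm (y - x))\<^sup>2)"

definition lower_transform_on :: "real \<Rightarrow> 'a::euclidean_space set \<Rightarrow> ('a \<Rightarrow> real) \<Rightarrow> 'a \<Rightarrow> real" where
  "lower_transform_on l \<Omega> g x = moreau_upper l \<Omega> (moreau_lower l \<Omega> g) x"

end

theory Submission
  imports Defs
begin

text \<open>For \<open>l > 0\<close> the lower transform of \<open>f\<close> is the supremum of the paraboloids
  \<open>c - l |\<cdot> - y|\<^sup>2\<close> lying below \<open>f\<close>: adding \<open>l |\<cdot>|\<^sup>2\<close> turns them into the affine minorants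
  of \<open>f + l |\<cdot>|\<^sup>2\<close>, and by the existence of subgradients affine minorants already determine
  a convex envelope. If \<open>f \<ge> 0\<close> vanishes off the open set \<open>\<Omega>\<close>, a paraboloid below \<open>f\<close> with
  vertex \<open>y\<close> outside \<open>closure \<Omega>\<close> has \<open>c \<le> f y = 0\<close>, so only vertices in \<open>closure \<Omega>\<close> matter.
  For those, the highest paraboloid below \<open>f\<close> has height \<open>moreau_lower l \<Omega> f y\<close>: outside \<open>\<Omega>\<close>
  it is dominated at \<open>z\<close> by its value at a frontier point on the segment from \<open>y\<close> to \<open>z\<close>, where
  \<open>f\<close> vanishes. For the squared distance to \<open>K \<union> - \<Omega>\<close> the modified function equals \<open>f\<close>,
  because \<open>inf\<^sub>\<Omega> f = 0\<close> is attained on \<open>K\<close>.\<close>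

lemma convex_on_UNIV_subgradient:
  fixes h :: "'a::euclidean_space \<Rightarrow> real"
  assumes h: "convex_on UNIV h"
  obtains p where "\<And>z. h x + inner p (z - x) \<le> h z"
proof -
  define S where "S = {(z, t). h z < t}"
  have "convex S"
    unfolding convex_def S_def
  proof clarsimp
    fix z1 t1 z2 t2 and u v :: real
    assume less: "h z1 < t1" "h z2 < t2" and uv: "0 \<le> u" "0 \<le> v" "u + v = 1"
    have "h (u *\<^sub>R z1 + v *\<^sub>R z2) \<le> u * h z1 + v * h z2"
      using h uv unfolding convex_on_def by auto
    also have "\<dots> < u * t1 + v * t2"
      using less uv by (cases "u = 0") (auto intro!: add_less_le_mono mult_strict_left_mono mult_left_mono)
    finally show "h (u *\<^sub>R z1 + v *\<^sub>R z2) < u * t1 + v * t2" .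
  qed
  moreover have "(x, h x + 1) \<in> S" "(x, h x) \<notin> S"
    by (simp_all add: S_def)
  then have "S \<noteq> {}" "S \<inter> {(x, h x)} = {}"
    by auto
  ultimately obtain a b where "a \<noteq> 0" "\<forall>s\<in>S. inner a s \<le> b" "b \<le> inner a (x, h x)"
    using separating_hyperplane_sets[OF _ convex_singleton] by blast
  moreover obtain a1 a0 where "a = (a1, a0)"
    by (cases a)
  ultimately have ne: "(a1, a0) \<noteq> 0"
    and below: "\<And>z t. h z < t \<Longrightarrow> inner a1 z + a0 * t \<le> b"
    and above: "b \<le> inner a1 x + a0 * h x"
    by (auto simp: S_def)
  have "a0 \<le> 0"
    using below[of x "h x + 1"] above by (simp add: algebra_simps)
  moreover have "a0 \<noteq> 0"
  proof
    assume "a0 = 0"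
    then have "inner a1 a1 \<le> 0"
      using below[of "x + a1" "h (x + a1) + 1"] above by (simp add: inner_add_right)
    then have "a1 = 0"
      using inner_ge_zero[of a1] by simp
    with ne \<open>a0 = 0\<close> show False
      by (simp add: zero_prod_def)
  qed
  ultimately have a0: "a0 < 0"
    by simp
  have "h x + inner ((- 1 / a0) *\<^sub>R a1) (z - x) \<le> h z" for z
  proof (rule ccontr)
    assume "\<not> ?thesis"
    then obtain t where t: "h z < t" "t < h x + inner ((- 1 / a0) *\<^sub>R a1) (z - x)"
      using dense not_le by blast
    have "a0 * (t - h x) \<le> inner a1 (x - z)"
      using below[OF t(1)] above by (simp add: algebra_simps inner_diff_right)
    with a0 t(2) show False
      by (simp add: field_simps inner_diff_right)
  qed
  then show thesis
    by (rule that)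
qed

lemma convex_on_affine_inner:
  fixes p :: "'a::real_inner"
  shows "convex_on UNIV (\<lambda>z. c + inner p z)"
proof (intro convex_onI convex_UNIV)
  fix t :: real and x y :: 'a
  have "c = (1 - t) * c + t * c"
    by (simp add: algebra_simps)
  then show "c + inner p ((1 - t) *\<^sub>R x + t *\<^sub>R y) \<le> (1 - t) * (c + inner p x) + t * (c + inner p y)"
    by (simp add: inner_add_right algebra_simps)
qed

lemma paraboloid_plus_square_eq_affine:
  fixes y z :: "'a::real_inner"
  shows "c - l * (norm (z - y))\<^sup>2 + l * (norm z)\<^sup>2 = (c - l * (norm y)\<^sup>2) + inner ((2 * l) *\<^sub>R y) z"
  by (simp add: power2_norm_eq_inner inner_diff_left inner_diff_right inner_commute algebra_simps)

lemma convex_minorant_le_convex_envelope: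
  assumes "convex_on UNIV h" "\<And>y. h y \<le> g y"
  shows "h x \<le> convex_envelope g x"
  unfolding convex_envelope_def
proof (rule cSup_upper)
  show "h x \<in> {h x |h. convex_on UNIV h \<and> (\<forall>y. h y \<le> g y)}"
    using assms by blast
  show "bdd_above {h x |h. convex_on UNIV h \<and> (\<forall>y. h y \<le> g y)}"
    by (rule bdd_aboveI[of _ "g x"]) auto
qed

lemma convex_envelope_le_affine_bound:
  fixes g :: "'a::euclidean_space \<Rightarrow> real"
  assumes "bdd_below (range g)"
    and affine_bound: "\<And>c p. (\<And>z. c + inner p z \<le> g z) \<Longrightarrow> c + inner p x \<le> B"
  shows "convex_envelope g x \<le> B"
  unfolding convex_envelope_def
proof (rule cSup_least)
  obtain m where "\<And>y. m \<le> g y"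
    using assms(1) by (auto simp: bdd_below_def)
  then show "{h x |h. convex_on UNIV h \<and> (\<forall>y. h y \<le> g y)} \<noteq> {}"
    by (auto simp: convex_on_const intro!: exI[of _ "\<lambda>_. m"])
next
  fix e
  assume "e \<in> {h x |h. convex_on UNIV h \<and> (\<forall>y. h y \<le> g y)}"
  then obtain h where e: "e = h x" and h: "convex_on UNIV h" "\<And>y. h y \<le> g y"
    by blast
  obtain p where p: "\<And>z. h x + inner p (z - x) \<le> h z"
    using convex_on_UNIV_subgradient[OF h(1)] by blast
  have "(h x - inner p x) + inner p z \<le> g z" for z
    using p[of z] h(2)[of z] by (simp add: inner_diff_right)
  then show "e \<le> B"
    using affine_bound[of "h x - inner p x" p] e by simp
qed

lemma paraboloid_minorant_le_lower_transform:
  fixes f :: "'a::euclidean_space \<Rightarrow> real"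
  assumes "\<And>z. c - l * (norm (z - y))\<^sup>2 \<le> f z"
  shows "c - l * (norm (x - y))\<^sup>2 \<le> lower_transform l f x"
proof -
  let ?h = "\<lambda>z. c - l * (norm (z - y))\<^sup>2 + l * (norm z)\<^sup>2"
  have "?h x \<le> convex_envelope (\<lambda>z. f z + l * (norm z)\<^sup>2) x"
  proof (rule convex_minorant_le_convex_envelope)
    show "convex_on UNIV ?h"
      unfolding paraboloid_plus_square_eq_affine by (rule convex_on_affine_inner)
    show "?h z \<le> f z + l * (norm z)\<^sup>2" for z
      using assms[of z] by simp
  qed
  then show ?thesis
    by (simp add: lower_transform_def)
qed

lemma lower_transform_le_paraboloid_bound:
  fixes f :: "'a::euclidean_space \<Rightarrow> real"
  assumes l: "l > 0" and "bdd_below (range f)"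
    and paraboloid_bound:
      "\<And>c y. (\<And>z. c - l * (norm (z - y))\<^sup>2 \<le> f z) \<Longrightarrow> c - l * (norm (x - y))\<^sup>2 \<le> B"
  shows "lower_transform l f x \<le> B"
proof -
  have "convex_envelope (\<lambda>z. f z + l * (norm z)\<^sup>2) x \<le> B + l * (norm x)\<^sup>2"
  proof (rule convex_envelope_le_affine_bound)
    obtain m where "\<And>z. m \<le> f z"
      using assms(2) by (auto simp: bdd_below_def)
    with l show "bdd_below (range (\<lambda>z. f z + l * (norm z)\<^sup>2))"
      by (intro bdd_belowI2[where m = m]) (simp add: add_increasing2)
  next
    fix c p
    assume affine: "\<And>z. c + inner p z \<le> f z + l * (norm z)\<^sup>2"
    \<comment> \<open>\<open>y\<close> is the vertex of the paraboloid \<open>z \<mapsto> c + p \<bullet> z - l |z|\<^sup>2\<close>\<close>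
    define y where "y = (1 / (2 * l)) *\<^sub>R p"
    have p: "(2 * l) *\<^sub>R y = p"
      using l by (simp add: y_def)
    have shift: "c + inner p z = (c + l * (norm y)\<^sup>2) - l * (norm (z - y))\<^sup>2 + l * (norm z)\<^sup>2" for z
      using paraboloid_plus_square_eq_affine[of "c + l * (norm y)\<^sup>2" l z y] by (simp add: p)
    have "(c + l * (norm y)\<^sup>2) - l * (norm (z - y))\<^sup>2 \<le> f z" for z
      using affine[of z] shift[of z] by simp
    then have "(c + l * (norm y)\<^sup>2) - l * (norm (x - y))\<^sup>2 \<le> B"
      by (rule paraboloid_bound)
    then show "c + inner p x \<le> B + l * (norm x)\<^sup>2"
      using shift[of x] by simp
  qed
  then show ?thesis
    by (simp add: lower_transform_def)
qed

lemma moreau_lower_le: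
  assumes "bdd_below (g ` closure \<Omega>)" "l \<ge> 0" "z \<in> closure \<Omega>"
  shows "moreau_lower l \<Omega> g y \<le> g z + l * (norm (z - y))\<^sup>2"
proof -
  obtain m where "\<And>w. w \<in> closure \<Omega> \<Longrightarrow> m \<le> g w"
    using assms(1) by (auto simp: bdd_below_def)
  then have "bdd_below ((\<lambda>w. g w + l * (norm (w - y))\<^sup>2) ` closure \<Omega>)"
    using assms(2) by (intro bdd_belowI2[where m = m]) (simp add: add_increasing2)
  then show ?thesis
    unfolding moreau_lower_def using assms(3) by (rule cINF_lower)
qed

lemma moreau_lower_nonneg:
  assumes "closure \<Omega> \<noteq> {}" "\<And>z. z \<in> closure \<Omega> \<Longrightarrow> 0 \<le> g z" "l \<ge> 0"
  shows "0 \<le> moreau_lower l \<Omega> g y"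
  unfolding moreau_lower_def using assms by (intro cINF_greatest) auto

lemma moreau_lower_sub_le_lower_transform_on:
  assumes "bdd_below (g ` closure \<Omega>)" "l \<ge> 0" "x \<in> closure \<Omega>" "y \<in> closure \<Omega>"
  shows "moreau_lower l \<Omega> g y - l * (norm (y - x))\<^sup>2 \<le> lower_transform_on l \<Omega> g x"
proof -
  have "bdd_above ((\<lambda>w. moreau_lower l \<Omega> g w - l * (norm (w - x))\<^sup>2) ` closure \<Omega>)"
  proof (rule bdd_aboveI2[where M = "g x"])
    fix w
    show "moreau_lower l \<Omega> g w - l * (norm (w - x))\<^sup>2 \<le> g x"
      using moreau_lower_le[OF assms(1-3), of w] unfolding norm_minus_commute[of w x] by linarith
  qed
  with assms(4) show ?thesis
    unfolding lower_transform_on_def moreau_upper_def by (rule cSUP_upper)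
qed

lemma moreau_lower_paraboloid_le:
  assumes "open \<Omega>" "l \<ge> 0" "\<And>w. 0 \<le> g w" "\<And>w. w \<in> frontier \<Omega> \<Longrightarrow> g w = 0"
    and y: "y \<in> closure \<Omega>"
  shows "moreau_lower l \<Omega> g y - l * (norm (z - y))\<^sup>2 \<le> g z"
proof -
  have bdd: "bdd_below (g ` closure \<Omega>)"
    by (rule bdd_belowI2) (rule assms(3))
  show ?thesis
  proof (cases "z \<in> \<Omega>")
    case True
    then have "z \<in> closure \<Omega>"
      using closure_subset by blast
    then show ?thesis
      using moreau_lower_le[OF bdd assms(2), of z y] by simp
  next
    case False
    obtain w where w: "w \<in> frontier \<Omega>" "dist w y \<le> dist z y"
    proof (cases "y \<in> \<Omega>")
      case True
      have "closed_segment y z \<inter> frontier \<Omega> \<noteq> {}"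
        by (rule connected_Int_frontier) (use True False in auto)
      then obtain w where "w \<in> closed_segment y z" "w \<in> frontier \<Omega>"
        by blast
      then show thesis
        using that dist_in_closed_segment[of w y z] by (simp add: dist_commute)
    next
      case False
      then have "y \<in> frontier \<Omega>"
        using y assms(1) by (simp add: frontier_def interior_open)
      then show thesis
        using that[of y] by simp
    qed
    have "w \<in> closure \<Omega>"
      using w(1) by (simp add: frontier_def)
    then have "moreau_lower l \<Omega> g y \<le> g w + l * (norm (w - y))\<^sup>2"
      by (rule moreau_lower_le[OF bdd assms(2)])
    also have "\<dots> = l * (dist w y)\<^sup>2"
      using assms(4)[OF w(1)] by (simp add: dist_norm)
    also have "\<dots> \<le> l * (dist z y)\<^sup>2"
      using w(2) assms(2) by (intro mult_left_mono power_mono) auto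
    finally show ?thesis
      using assms(3)[of z] by (simp add: dist_norm)
  qed
qed

theorem lower_transform_eq_lower_transform_on:
  fixes f :: "'a::euclidean_space \<Rightarrow> real"
  assumes "open \<Omega>" "l > 0" "\<And>z. 0 \<le> f z" "\<And>z. z \<notin> \<Omega> \<Longrightarrow> f z = 0"
    and x: "x \<in> closure \<Omega>"
  shows "lower_transform l f x = lower_transform_on l \<Omega> f x"
proof (rule antisym)
  have bdd: "bdd_below (f ` closure \<Omega>)"
    by (rule bdd_belowI2) (rule assms(3))
  show "lower_transform l f x \<le> lower_transform_on l \<Omega> f x"
  proof (rule lower_transform_le_paraboloid_bound)
    show "bdd_below (range f)"
      by (rule bdd_belowI2) (rule assms(3))
    fix c y
    assume below: "\<And>z. c - l * (norm (z - y))\<^sup>2 \<le> f z"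
    show "c - l * (norm (x - y))\<^sup>2 \<le> lower_transform_on l \<Omega> f x"
    proof (cases "y \<in> closure \<Omega>")
      case True
      have "c \<le> moreau_lower l \<Omega> f y"
        unfolding moreau_lower_def using x below by (intro cINF_greatest) (auto simp: algebra_simps)
      then have "c - l * (norm (x - y))\<^sup>2 \<le> moreau_lower l \<Omega> f y - l * (norm (y - x))\<^sup>2"
        unfolding norm_minus_commute[of x y] by simp
      also have "\<dots> \<le> lower_transform_on l \<Omega> f x"
        using moreau_lower_sub_le_lower_transform_on[OF bdd _ x True] assms(2) by simp
      finally show ?thesis .
    next
      case False
      then have "y \<notin> \<Omega>"
        using closure_subset by blast
      then have "c \<le> 0"
        using below[of y] assms(4) by simp
      moreover have "0 \<le> l * (norm (x - y))\<^sup>2"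
        using assms(2) by simp
      moreover have "0 \<le> moreau_lower l \<Omega> f x - l * (norm (x - x))\<^sup>2"
        using x assms(2,3) by (simp, intro moreau_lower_nonneg) auto
      moreover have "\<dots> \<le> lower_transform_on l \<Omega> f x"
        using moreau_lower_sub_le_lower_transform_on[OF bdd _ x x] assms(2) by simp
      ultimately show ?thesis
        by linarith
    qed
  qed (use assms(2) in simp)
  have frontier_zero: "f w = 0" if "w \<in> frontier \<Omega>" for w
    using that assms(1,4) by (simp add: frontier_def interior_open)
  show "lower_transform_on l \<Omega> f x \<le> lower_transform l f x"
    unfolding lower_transform_on_def moreau_upper_def
  proof (rule cSUP_least)
    show "closure \<Omega> \<noteq> {}"
      using x by auto
    fix y
    assume "y \<in> closure \<Omega>"
    then have "moreau_lower l \<Omega> f y - l * (norm (z - y))\<^sup>2 \<le> f z" for z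
      using assms(2) by (intro moreau_lower_paraboloid_le[OF assms(1) _ assms(3) frontier_zero]) auto
    then have "moreau_lower l \<Omega> f y - l * (norm (x - y))\<^sup>2 \<le> lower_transform l f x"
      by (rule paraboloid_minorant_le_lower_transform)
    then show "moreau_lower l \<Omega> f y - l * (norm (y - x))\<^sup>2 \<le> lower_transform l f x"
      unfolding norm_minus_commute[of y x] .
  qed
qed

theorem corollary3p3:
  fixes \<Omega> K :: "'a::euclidean_space set" and l :: real
  assumes "open \<Omega>" and "bounded \<Omega>"
    and "compact K" and "K \<noteq> {}" and "K \<subseteq> \<Omega>"
    and "l > 0"
    and "x \<in> closure \<Omega>"
  shows "let f = (\<lambda>y. (infdist y (K \<union> - \<Omega>))\<^sup>2);
             fm = (\<lambda>y. if y \<in> \<Omega> then f y else (INF z\<in>\<Omega>. f z))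
         in medial_axis_map l (K \<union> - \<Omega>) x
            = (1 + l) * (fm x - lower_transform_on l \<Omega> fm x)"
proof -
  let ?f = "\<lambda>y. (infdist y (K \<union> - \<Omega>))\<^sup>2"
  obtain k where "k \<in> K"
    using assms(4) by blast
  then have inf_eq: "(INF z\<in>\<Omega>. ?f z) = 0"
    using assms(5) by (intro cInf_eq_minimum) (auto intro!: image_eqI[where x = k])
  then have modified_eq: "(\<lambda>y. if y \<in> \<Omega> then ?f y else (INF z\<in>\<Omega>. ?f z)) = ?f"
    by auto
  have transform_eq: "lower_transform l ?f x = lower_transform_on l \<Omega> ?f x"
    using assms(1,6,7) by (intro lower_transform_eq_lower_transform_on) auto
  show ?thesis
    unfolding Let_def medial_axis_map_def modified_eq transform_eq using inf_eq by simp
qed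

end
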